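(* Under Assumptions (A1)–(A4), $\sum_{\mathbf k\in\mathbb N^d}\sqrt{\pi_0(\mathbf k)}<\infty$. Moreover, for every $p\in[1,\infty]$, $\ell_p(\overline\pi_n,\pi_0)=O_{\mathbb P}(1/\sqrt n)$, where $\overline\pi_n(\mathbf k)=\frac1n\sum_{i=1}^n\mathbb I\{\mathbf X_i=\mathbf k\}$ is the empirical estimator based on i.i.d. $\mathbf X_1,\dots,\mathbf X_n\sim\pi_0$.
   Context: Let $b_k>0$ for all $k\in\mathbb N=\{0,1,2,\dots\}$, $b(\theta)=\sum_{k\ge0}b_k\theta^k$ with radius of convergence $R\in(0,\infty]$, $\mathcal T=[0,R]$ if $b(R)<\infty$ and $\mathcal T=[0,R)$ if $b(R)=\infty$, $f_\theta(k)=b_k\theta^k/b(\theta)$. Fix $d\ge1$, $\Theta=\mathcal T^d$, $\pi_0(\mathbf k)=\int_\Theta\prod_{j=1}^d f_{\theta_j}(k_j)\,dQ_0(\boldsymbol\theta)$ for a probability measure $Q_0$ on $\Theta$. $\ell_p(\pi_1,\pi_2)=(\sum_{\mathbf k}|\pi_1(\mathbf k)-\pi_2(\mathbf k)|^p)^{1/p}$ for $p<\infty$ and $\sup_{\mathbf k}|\pi_1(\mathbf k)-\pi_2(\mathbf k)|$ for $p=\infty$. Assumptions: (A1) If $R<\infty$, there is $q_0\in(0,1)$ with $\mathrm{supp}\,Q_0\subseteq[0,q_0R]^d$; if $R=\infty$, there is $M>0$ with $\mathrm{supp}\,Q_0\subseteq[0,M]^d$. (A2) If $Q_0(\{(0,\dots,0)\})>0$,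 there exist $\eta_0\in(0,1)$, $\delta_0\in(0,R)$ with $Q_0(\{(0,\dots,0)\})\le1-\eta_0$ and $\mathrm{supp}\,Q_0\cap\bigcup_{j}\{\boldsymbol\theta:\theta_j\in(0,\delta_0)\}=\varnothing$; if $Q_0(\{(0,\dots,0)\})=0$, there is $\delta_0\in(0,R)$ with the same support condition. (A3) There is $V\in\mathbb N$ with $b_k/b_0\ge k^{-k}$ for $k\ge V$. (A4) $\lim_{k\to\infty}b_{k+1}/b_k$ exists in $[0,\infty)$. *)

theory Defs
  imports "HOL-Probability.Probability"
begin

definition bfun :: "(nat \<Rightarrow> real) \<Rightarrow> real \<Rightarrow> real" where
  "bfun b \<theta> = (\<Sum>k. b k * \<theta> ^ k)"

definition Tset :: "(nat \<Rightarrow> real) \<Rightarrow> real set" where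
  "Tset b = {\<theta>. 0 \<le> \<theta> \<and> (ereal \<theta> < conv_radius b \<or>
       (ereal \<theta> = conv_radius b \<and> summable (\<lambda>k. b k * \<theta> ^ k)))}"

definition fps_dist :: "(nat \<Rightarrow> real) \<Rightarrow> real \<Rightarrow> nat \<Rightarrow> real" where
  "fps_dist b \<theta> k = b k * \<theta> ^ k / bfun b \<theta>"

definition pi_mix :: "(nat \<Rightarrow> real) \<Rightarrow> (real ^ 'd) measure \<Rightarrow> ('d::finite \<Rightarrow> nat) \<Rightarrow> real" where
  "pi_mix b Q k = (\<integral>\<theta>. (\<Prod>j\<in>UNIV. fps_dist b (\<theta> $ j) (k j)) \<partial>Q)"

definition msupp :: "'a::topological_space measure \<Rightarrow> 'a set" where
  "msupp M = {x. \<forall>U. open U \<and> x \<in> U \<longrightarrow> emeasure M U > 0}"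

definition lp_dist :: "ereal \<Rightarrow> ('k \<Rightarrow> real) \<Rightarrow> ('k \<Rightarrow> real) \<Rightarrow> real" where
  "lp_dist p \<pi>1 \<pi>2 =
     (if p = \<infinity> then (SUP k. \<bar>\<pi>1 k - \<pi>2 k\<bar>)
      else (\<Sum>\<^sub>\<infinity>k. \<bar>\<pi>1 k - \<pi>2 k\<bar> powr real_of_ereal p) powr (1 / real_of_ereal p))"

definition emp_pmf :: "(nat \<Rightarrow> 'a \<Rightarrow> 'k) \<Rightarrow> nat \<Rightarrow> 'a \<Rightarrow> 'k \<Rightarrow> real" where
  "emp_pmf X n \<omega> k = real (card {i. i < n \<and> X i \<omega> = k}) / real n"

end

theory Submission
  imports Defs
begin

(* By (A1) the mixing measure Q0 lives on a cube [0, rho]^d with rho strictly inside the radius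
   of convergence, so pi0(k) <= prod_j b_(k_j) rho^(k_j) / b_0, and the square roots of the
   factors are dominated by geometric series.  For the rate, the l_p distance is at most the
   l_1 distance, and each coordinate of the empirical pmf is an average of n pairwise
   uncorrelated indicators, so E |pi_n(k) - pi0(k)| <= sqrt (pi0(k) / n).  Markov's inequality
   for the l_1 distance then bounds P(l_p > C / sqrt n) by (sum_k sqrt pi0(k)) / C. *)

lemma AE_in_msupp:
  fixes Q :: "'a::second_countable_topology measure"
  assumes "sets Q = sets borel"
  shows "AE x in Q. x \<in> msupp Q"
proof -
  define N where "N = {U::'a set. open U \<and> emeasure Q U = 0}"
  obtain N' where N': "N' \<subseteq> N" "countable N'" "\<Union>N' = \<Union>N"
    using Lindelof[of N] unfolding N_def by blast
  have "(\<Union>U\<in>N'. U) \<in> null_sets Q"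
    using N' assms by (intro null_sets_UN') (auto simp: N_def null_sets_def)
  moreover have "{x\<in>space Q. x \<notin> msupp Q} \<subseteq> (\<Union>U\<in>N'. U)"
    using N'(3) by (auto simp: msupp_def N_def zero_less_iff_neq_zero)
  ultimately show ?thesis
    by (intro AE_I') auto
qed

lemma bounded_support_inside_conv_radius:
  fixes b :: "nat \<Rightarrow> real" and Q :: "(real ^ 'd::finite) measure"
  assumes R_pos: "conv_radius b > 0" and Q_sets: "sets Q = sets borel"
    and A1: "(\<forall>r. conv_radius b = ereal r \<longrightarrow>
               (\<exists>q0. 0 < q0 \<and> q0 < 1 \<and>
                  msupp Q \<subseteq> {\<theta>. \<forall>j. 0 \<le> \<theta> $ j \<and> \<theta> $ j \<le> q0 * r}))
           \<and> (conv_radius b = \<infinity> \<longrightarrow>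
               (\<exists>M>0. msupp Q \<subseteq> {\<theta>. \<forall>j. 0 \<le> \<theta> $ j \<and> \<theta> $ j \<le> M}))"
  obtains \<rho> where "0 \<le> \<rho>" "ereal \<rho> < conv_radius b" "AE \<theta> in Q. \<forall>j. 0 \<le> \<theta> $ j \<and> \<theta> $ j \<le> \<rho>"
proof -
  obtain \<rho> where \<rho>: "0 \<le> \<rho>" "ereal \<rho> < conv_radius b"
    and supp: "msupp Q \<subseteq> {\<theta>. \<forall>j. 0 \<le> \<theta> $ j \<and> \<theta> $ j \<le> \<rho>}"
  proof (cases "conv_radius b")
    case (real r)
    with A1 obtain q0 where "0 < q0" "q0 < 1" "msupp Q \<subseteq> {\<theta>. \<forall>j. 0 \<le> \<theta> $ j \<and> \<theta> $ j \<le> q0 * r}"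
      by blast
    moreover have "0 < r"
      using R_pos real by simp
    ultimately show ?thesis
      using that[of "q0 * r"] real by simp
  next
    case PInf
    with A1 obtain M where "0 < M" "msupp Q \<subseteq> {\<theta>. \<forall>j. 0 \<le> \<theta> $ j \<and> \<theta> $ j \<le> M}"
      by blast
    then show ?thesis
      using that[of M] PInf by simp
  qed (use R_pos in simp)
  moreover have "AE \<theta> in Q. \<forall>j. 0 \<le> \<theta> $ j \<and> \<theta> $ j \<le> \<rho>"
    using AE_in_msupp[OF Q_sets] by eventually_elim (use supp in auto)
  ultimately show ?thesis
    using that by blast
qed

lemma power_series_term_le_bfun:
  fixes b :: "nat \<Rightarrow> real"
  assumes "\<And>k. b k \<ge> 0" "0 \<le> \<theta>" "ereal \<theta> < conv_radius b"
  shows "b k * \<theta> ^ k \<le> bfun b \<theta>"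
proof -
  have "summable (\<lambda>k. b k * \<theta> ^ k)"
    using assms by (intro summable_in_conv_radius) auto
  then have "(\<Sum>k\<in>{k}. b k * \<theta> ^ k) \<le> bfun b \<theta>"
    unfolding bfun_def by (rule sum_le_suminf) (use assms in auto)
  then show ?thesis by simp
qed

lemma fps_dist_nonneg:
  fixes b :: "nat \<Rightarrow> real"
  assumes "\<And>k. b k \<ge> 0" "0 \<le> \<theta>" "ereal \<theta> < conv_radius b"
  shows "0 \<le> fps_dist b \<theta> k"
proof -
  have "b 0 \<le> bfun b \<theta>"
    using power_series_term_le_bfun[of b \<theta> 0] assms by simp
  then have "0 \<le> bfun b \<theta>"
    using assms(1)[of 0] by linarith
  then show ?thesis
    unfolding fps_dist_def using assms by (simp add: divide_nonneg_nonneg)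
qed

lemma fps_dist_le_coeff_power:
  fixes b :: "nat \<Rightarrow> real"
  assumes b_pos: "\<And>k. b k > 0" and \<theta>: "0 \<le> \<theta>" "\<theta> \<le> \<rho>" and \<rho>: "ereal \<rho> < conv_radius b"
  shows "fps_dist b \<theta> k \<le> b k * \<rho> ^ k / b 0"
proof -
  have "ereal \<theta> < conv_radius b"
    using \<theta> \<rho> by (meson ereal_less_eq(3) order.strict_trans1)
  then have "b 0 \<le> bfun b \<theta>"
    using power_series_term_le_bfun[of b \<theta> 0] b_pos \<theta> by (simp add: less_imp_le)
  moreover have "b k * \<theta> ^ k \<le> b k * \<rho> ^ k"
    using b_pos[of k] \<theta> by (simp add: power_mono)
  ultimately show ?thesis
    unfolding fps_dist_def using b_pos[of 0] b_pos[of k] \<theta>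
    by (intro frac_le) (auto simp: less_imp_le)
qed

lemma summable_on_sqrt_power_series:
  fixes b :: "nat \<Rightarrow> real"
  assumes b_nonneg: "\<And>k. b k \<ge> 0" and \<rho>: "0 \<le> \<rho>" "ereal \<rho> < conv_radius b"
  shows "(\<lambda>k. sqrt (b k * \<rho> ^ k)) summable_on UNIV"
proof -
  obtain \<rho>' where "ereal \<rho> < ereal \<rho>'" "ereal \<rho>' < conv_radius b"
    using ereal_dense2[OF \<rho>(2)] by blast
  then have \<rho>': "\<rho> < \<rho>'" "summable (\<lambda>k. b k * \<rho>' ^ k)"
    using \<rho>(1) by (auto intro: summable_in_conv_radius)
  obtain B where B: "\<And>k. norm (b k * \<rho>' ^ k) \<le> B"
    using summable_imp_Bseq[OF \<rho>'(2)] unfolding Bseq_def by blast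
  \<comment> \<open>the terms at the larger radius are bounded, so the square roots at \<open>\<rho>\<close> decay geometrically\<close>
  have geometric: "summable (\<lambda>k. sqrt B * sqrt (\<rho> / \<rho>') ^ k)"
    using \<rho>(1) \<rho>'(1) by (intro summable_mult summable_geometric) auto
  have "norm (sqrt (b k * \<rho> ^ k)) \<le> sqrt B * sqrt (\<rho> / \<rho>') ^ k" for k
  proof -
    have "b k * \<rho> ^ k = (b k * \<rho>' ^ k) * (\<rho> / \<rho>') ^ k"
      using \<rho>(1) \<rho>'(1) by (simp add: power_divide)
    also have "\<dots> \<le> B * (\<rho> / \<rho>') ^ k"
      using B[of k] \<rho>(1) \<rho>'(1) by (intro mult_right_mono) auto
    finally have "sqrt (b k * \<rho> ^ k) \<le> sqrt (B * (\<rho> / \<rho>') ^ k)"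
      by (rule real_sqrt_le_mono)
    then show ?thesis
      using b_nonneg[of k] \<rho>(1) by (simp add: real_sqrt_mult real_sqrt_power)
  qed
  then have "summable (\<lambda>k. sqrt (b k * \<rho> ^ k))"
    by (rule summable_comparison_test'[OF geometric])
  then show ?thesis
    by (rule summable_nonneg_imp_summable_on) (use b_nonneg \<rho> in auto)
qed

lemma summable_on_prod_fun:
  fixes h :: "'d::finite \<Rightarrow> 'b::countable \<Rightarrow> real"
  assumes "\<And>j. h j summable_on UNIV"
  shows "(\<lambda>k. \<Prod>j\<in>UNIV. h j (k j)) summable_on UNIV"
proof -
  have iff: "f summable_on A \<longleftrightarrow> Infinite_Set_Sum.abs_summable_on f A" for f :: "_ \<Rightarrow> real" and A
    using summable_on_iff_abs_summable_on_real abs_summable_equivalent by blast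
  have "Infinite_Set_Sum.abs_summable_on (\<lambda>k. \<Prod>j\<in>UNIV. h j (k j)) (PiE UNIV (\<lambda>_. UNIV))"
    using assms by (intro abs_summable_on_prod_PiE) (auto simp: iff)
  then show ?thesis
    by (simp add: iff PiE_UNIV_domain)
qed

lemma real_sqrt_prod: "sqrt (\<Prod>x\<in>A. f x) = (\<Prod>x\<in>A. sqrt (f x))"
  by (induction A rule: infinite_finite_induct) (auto simp: real_sqrt_mult)

lemma integral_le_const_AE:
  fixes f :: "'a \<Rightarrow> real"
  assumes "prob_space Q" "AE x in Q. f x \<le> c" "0 \<le> c"
  shows "integral\<^sup>L Q f \<le> c"
proof (cases "integrable Q f")
  case True
  have "integral\<^sup>L Q f \<le> integral\<^sup>L Q (\<lambda>_. c)"
    using True assms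
    by (intro integral_mono_AE) (auto simp: prob_space.finite_measure finite_measure.integrable_const)
  then show ?thesis
    using assms(1) by (simp add: prob_space.prob_space)
qed (use assms in \<open>simp add: not_integrable_integral_eq\<close>)

lemma pi_mix_nonneg:
  fixes b :: "nat \<Rightarrow> real" and Q :: "(real ^ 'd::finite) measure"
  assumes b_pos: "\<And>k. b k > 0"
    and supp: "AE \<theta> in Q. \<forall>j. 0 \<le> \<theta> $ j \<and> \<theta> $ j \<le> \<rho>" and \<rho>: "ereal \<rho> < conv_radius b"
  shows "0 \<le> pi_mix b Q k"
  unfolding pi_mix_def
proof (rule integral_nonneg_AE)
  show "AE \<theta> in Q. 0 \<le> (\<Prod>j\<in>UNIV. fps_dist b (\<theta> $ j) (k j))"
    using supp by eventually_elim
      (use b_pos in \<open>auto intro!: prod_nonneg fps_dist_nonneg order.strict_trans1[OF _ \<rho>]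
         simp: less_imp_le\<close>)
qed

lemma pi_mix_le_prod:
  fixes b :: "nat \<Rightarrow> real" and Q :: "(real ^ 'd::finite) measure"
  assumes b_pos: "\<And>k. b k > 0" and Q: "prob_space Q"
    and supp: "AE \<theta> in Q. \<forall>j. 0 \<le> \<theta> $ j \<and> \<theta> $ j \<le> \<rho>"
    and \<rho>: "0 \<le> \<rho>" "ereal \<rho> < conv_radius b"
  shows "pi_mix b Q k \<le> (\<Prod>j\<in>UNIV. b (k j) * \<rho> ^ k j / b 0)"
  unfolding pi_mix_def
proof (rule integral_le_const_AE[OF Q])
  show "AE \<theta> in Q. (\<Prod>j\<in>UNIV. fps_dist b (\<theta> $ j) (k j)) \<le> (\<Prod>j\<in>UNIV. b (k j) * \<rho> ^ k j / b 0)"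
    using supp by eventually_elim
      (use b_pos \<rho> in \<open>auto intro!: prod_mono fps_dist_le_coeff_power fps_dist_nonneg
         order.strict_trans1[OF _ \<rho>(2)] simp: less_imp_le\<close>)
  show "0 \<le> (\<Prod>j\<in>UNIV. b (k j) * \<rho> ^ k j / b 0)"
    using b_pos \<rho> by (auto intro!: prod_nonneg simp: less_imp_le)
qed

lemma summable_on_sqrt_pi_mix:
  fixes b :: "nat \<Rightarrow> real" and Q :: "(real ^ 'd::finite) measure"
  assumes b_pos: "\<And>k. b k > 0" and Q: "prob_space Q"
    and supp: "AE \<theta> in Q. \<forall>j. 0 \<le> \<theta> $ j \<and> \<theta> $ j \<le> \<rho>"
    and \<rho>: "0 \<le> \<rho>" "ereal \<rho> < conv_radius b"
  shows "(\<lambda>k. sqrt (pi_mix b Q k)) summable_on UNIV"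
proof -
  define h where "h m = sqrt (b m * \<rho> ^ m) * (1 / sqrt (b 0))" for m
  have "(\<lambda>k::'d \<Rightarrow> nat. \<Prod>j\<in>UNIV. h (k j)) summable_on UNIV"
    unfolding h_def using summable_on_sqrt_power_series[of b \<rho>] b_pos \<rho>
    by (intro summable_on_prod_fun summable_on_cmult_left) (auto simp: less_imp_le)
  moreover have "sqrt (pi_mix b Q k) \<le> (\<Prod>j\<in>UNIV. h (k j))" for k
  proof -
    have "sqrt (pi_mix b Q k) \<le> sqrt (\<Prod>j\<in>UNIV. b (k j) * \<rho> ^ k j / b 0)"
      using pi_mix_le_prod[OF b_pos Q supp \<rho>] by (rule real_sqrt_le_mono)
    also have "\<dots> = (\<Prod>j\<in>UNIV. h (k j))"
      by (simp add: h_def real_sqrt_prod real_sqrt_divide)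
    finally show ?thesis .
  qed
  moreover have "0 \<le> sqrt (pi_mix b Q k)" for k
    using pi_mix_nonneg[OF b_pos supp \<rho>(2)] by simp
  ultimately show ?thesis
    by (rule summable_on_comparison_test)
qed

lemma lp_dist_le_if_finite_sums_le:
  fixes \<pi>1 \<pi>2 :: "'k \<Rightarrow> real"
  assumes p: "1 \<le> p" and sums_le: "\<And>F. finite F \<Longrightarrow> (\<Sum>k\<in>F. \<bar>\<pi>1 k - \<pi>2 k\<bar>) \<le> B"
  shows "lp_dist p \<pi>1 \<pi>2 \<le> B"
proof -
  define d where "d k = \<bar>\<pi>1 k - \<pi>2 k\<bar>" for k
  have d_nonneg: "0 \<le> d k" and d_le: "d k \<le> B" for k
    using sums_le[of "{k}"] by (simp_all add: d_def)
  have B_nonneg: "0 \<le> B"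
    using order.trans[OF d_nonneg d_le] .
  show ?thesis
  proof (cases "p = \<infinity>")
    case True
    then show ?thesis
      unfolding lp_dist_def using d_le by (simp add: d_def cSUP_least)
  next
    case False
    define q where "q = real_of_ereal p"
    have q: "1 \<le> q"
      using p False unfolding q_def by (cases p) auto
    \<comment> \<open>interpolation between \<open>l_1\<close> and \<open>l_\<infinity>\<close>, both of which bound \<open>d\<close> by \<open>B\<close>\<close>
    have "sum (\<lambda>k. d k powr q) F \<le> B powr q" if "finite F" for F
    proof -
      have "sum (\<lambda>k. d k powr q) F \<le> sum (\<lambda>k. B powr (q - 1) * d k) F"
      proof (rule sum_mono)
        fix k
        show "d k powr q \<le> B powr (q - 1) * d k"
        proof (cases "d k = 0")
          case False
          then have "d k powr q = d k powr (q - 1) * d k"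
            using d_nonneg[of k] by (simp add: powr_diff)
          also have "\<dots> \<le> B powr (q - 1) * d k"
            using d_nonneg[of k] d_le[of k] q by (intro mult_right_mono powr_mono2) auto
          finally show ?thesis .
        qed simp
      qed
      also have "\<dots> \<le> B powr (q - 1) * B"
        using sums_le[OF that] by (simp add: sum_distrib_left[symmetric] d_def mult_left_mono)
      also have "\<dots> = B powr q"
        using B_nonneg q by (cases "B = 0") (auto simp: powr_diff)
      finally show ?thesis .
    qed
    then have "infsum (\<lambda>k. d k powr q) UNIV \<le> B powr q"
      using d_le d_nonneg
      by (cases "(\<lambda>k. d k powr q) summable_on UNIV")
        (auto intro: infsum_le_finite_sums simp: infsum_not_exists)
    then have "infsum (\<lambda>k. d k powr q) UNIV powr (1 / q) \<le> (B powr q) powr (1 / q)"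
      using q by (intro powr_mono2 infsum_nonneg) auto
    also have "\<dots> = B"
      using q B_nonneg by (simp add: powr_powr)
    finally show ?thesis
      unfolding lp_dist_def using False by (simp add: d_def q_def)
  qed
qed

lemma nn_integral_count_space_eq_infsum:
  fixes f :: "'a \<Rightarrow> real"
  assumes "f summable_on A" "\<And>x. x \<in> A \<Longrightarrow> 0 \<le> f x"
  shows "(\<integral>\<^sup>+x. ennreal (f x) \<partial>count_space A) = ennreal (infsum f A)"
proof -
  have "Infinite_Set_Sum.abs_summable_on f A"
    using assms(1) summable_on_iff_abs_summable_on_real abs_summable_equivalent by blast
  then show ?thesis
    using assms(2) by (simp add: nn_integral_conv_infsetsum infsetsum_infsum)
qed

lemma emeasure_lp_dist_gt_le:
  fixes Y :: "'a \<Rightarrow> 'k::countable \<Rightarrow> real"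
  assumes [measurable]: "\<And>k. (\<lambda>\<omega>. Y \<omega> k) \<in> borel_measurable M"
    and p: "1 \<le> p" and t: "0 < t"
  shows "emeasure M {\<omega>\<in>space M. t < lp_dist p (Y \<omega>) \<pi>}
           \<le> (\<integral>\<^sup>+k. \<integral>\<^sup>+\<omega>. ennreal (\<bar>Y \<omega> k - \<pi> k\<bar> / t) \<partial>M \<partial>count_space UNIV)"
proof (cases "{\<omega>\<in>space M. t < lp_dist p (Y \<omega>) \<pi>} \<in> sets M")
  case True
  define E where "E = {\<omega>\<in>space M. t < lp_dist p (Y \<omega>) \<pi>}"
  have "indicator E \<omega> \<le> (\<integral>\<^sup>+k. ennreal (\<bar>Y \<omega> k - \<pi> k\<bar> / t) \<partial>count_space UNIV)" for \<omega>
  proof (cases "\<omega> \<in> E")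
    case True
    then obtain F where F: "finite F" "t < (\<Sum>k\<in>F. \<bar>Y \<omega> k - \<pi> k\<bar>)"
      using lp_dist_le_if_finite_sums_le[OF p, of "Y \<omega>" \<pi> t] unfolding E_def by force
    have "ennreal 1 \<le> ennreal ((\<Sum>k\<in>F. \<bar>Y \<omega> k - \<pi> k\<bar>) / t)"
      using F t by (intro ennreal_leI) simp
    also have "\<dots> = (\<Sum>k\<in>F. ennreal (\<bar>Y \<omega> k - \<pi> k\<bar> / t))"
      using t by (simp add: sum_divide_distrib)
    also have "\<dots> = (\<integral>\<^sup>+k. ennreal (\<bar>Y \<omega> k - \<pi> k\<bar> / t) * indicator F k \<partial>count_space UNIV)"
      using F(1) by (simp add: nn_integral_count_space_finite flip: nn_integral_count_space_indicator)
    also have "\<dots> \<le> (\<integral>\<^sup>+k. ennreal (\<bar>Y \<omega> k - \<pi> k\<bar> / t) \<partial>count_space UNIV)"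
      by (intro nn_integral_mono) (simp add: indicator_def)
    finally show ?thesis
      using True by simp
  qed simp
  then have "emeasure M E \<le> (\<integral>\<^sup>+\<omega>. \<integral>\<^sup>+k. ennreal (\<bar>Y \<omega> k - \<pi> k\<bar> / t) \<partial>count_space UNIV \<partial>M)"
    using True unfolding E_def by (simp add: nn_integral_mono flip: nn_integral_indicator)
  also have "\<dots> = (\<integral>\<^sup>+k. \<integral>\<^sup>+\<omega>. ennreal (\<bar>Y \<omega> k - \<pi> k\<bar> / t) \<partial>M \<partial>count_space UNIV)"
    by (rule nn_integral_count_space_nn_integral) auto
  finally show ?thesis
    unfolding E_def .
qed (simp add: emeasure_notin_sets)

lemma sets_Collect_emp_pmf:
  fixes X :: "nat \<Rightarrow> 'a \<Rightarrow> 'k::countable"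
  assumes [measurable]: "\<And>i. X i \<in> measurable M (count_space UNIV)"
  shows "{\<omega>\<in>space M. P (emp_pmf X n \<omega>)} \<in> sets M"
proof -
  \<comment> \<open>\<open>emp_pmf X n \<omega>\<close> only depends on the sample, a point of the countable type of lists\<close>
  define sample where "sample \<omega> = map (\<lambda>i. X i \<omega>) [0..<n]" for \<omega>
  define freq where "freq xs = (\<lambda>k. real (card {i. i < n \<and> xs ! i = k}) / n)" for xs :: "'k list"
  have "sample \<in> measurable M (count_space UNIV)"
    unfolding measurable_count_space_eq2_countable
  proof safe
    fix xs :: "'k list"
    have "length (sample \<omega>) = n" "\<And>i. i < n \<Longrightarrow> sample \<omega> ! i = X i \<omega>" for \<omega>
      by (simp_all add: sample_def)
    then have "sample -` {xs} \<inter> space M = {\<omega>\<in>space M. length xs = n \<and> (\<forall>i\<in>{..<n}. X i \<omega> = xs ! i)}"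
      by (auto simp: list_eq_iff_nth_eq)
    also have "\<dots> \<in> sets M"
      by (intro sets.sets_Collect_conj sets.sets_Collect_finite_All sets.sets_Collect_const) simp_all
    finally show "sample -` {xs} \<inter> space M \<in> sets M" .
  qed simp
  moreover have "emp_pmf X n \<omega> = freq (sample \<omega>)" for \<omega>
  proof -
    have "{i. i < n \<and> sample \<omega> ! i = k} = {i. i < n \<and> X i \<omega> = k}" for k
      by (auto simp: sample_def)
    then show ?thesis
      by (simp add: emp_pmf_def freq_def fun_eq_iff)
  qed
  ultimately show ?thesis
    using measurable_sets[of sample M "count_space UNIV" "{xs. P (freq xs)}"] by (simp add: vimage_def Int_def)
qed

lemma emp_pmf_eq_mean_indicator:
  "emp_pmf X n \<omega> k = (\<Sum>i<n. indicator {\<omega>. X i \<omega> = k} \<omega>) / n"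
proof -
  have "{i. i < n \<and> X i \<omega> = k} = {..<n} \<inter> {i. X i \<omega> = k}"
    by auto
  then show ?thesis
    by (simp add: emp_pmf_def indicator_def sum.If_cases)
qed

lemma borel_measurable_emp_pmf:
  assumes [measurable]: "\<And>i. X i \<in> measurable M (count_space UNIV)"
  shows "(\<lambda>\<omega>. emp_pmf X n \<omega> k) \<in> borel_measurable M"
  unfolding emp_pmf_eq_mean_indicator by measurable

context prob_space
begin

lemma expectation_abs_le_sqrt_expectation_square:
  fixes Y :: "'a \<Rightarrow> real"
  assumes "integrable M Y" "integrable M (\<lambda>x. (Y x)\<^sup>2)"
  shows "expectation (\<lambda>x. \<bar>Y x\<bar>) \<le> sqrt (expectation (\<lambda>x. (Y x)\<^sup>2))"
proof -
  have "0 \<le> variance (\<lambda>x. \<bar>Y x\<bar>)"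
    by (intro integral_nonneg_AE) auto
  also have "\<dots> = expectation (\<lambda>x. (Y x)\<^sup>2) - (expectation (\<lambda>x. \<bar>Y x\<bar>))\<^sup>2"
    using variance_eq[of "\<lambda>x. \<bar>Y x\<bar>"] assms by simp
  finally show ?thesis
    by (simp add: real_le_rsqrt)
qed

lemma prob_eq_if_distr_eq_density:
  assumes "X \<in> measurable M (count_space UNIV)"
    and "distr M (count_space UNIV) X = density (count_space UNIV) (\<lambda>k. ennreal (\<pi> k))"
    and "0 \<le> \<pi> k"
  shows "prob {\<omega>\<in>space M. X \<omega> = k} = \<pi> k"
proof -
  have "emeasure M (X -` {k} \<inter> space M) = emeasure (distr M (count_space UNIV) X) {k}"
    using assms(1) by (simp add: emeasure_distr)
  also have "\<dots> = ennreal (\<pi> k)"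
    using assms(2) by (simp add: emeasure_density)
  finally show ?thesis
    using assms(3) by (simp add: emeasure_eq_measure vimage_def Int_def conj_commute)
qed

lemma prob_conj_eq_mult_if_indep_vars:
  assumes "indep_vars (\<lambda>_. count_space UNIV) X I" "i \<in> I" "j \<in> I" "i \<noteq> j"
  shows "prob {\<omega>\<in>space M. X i \<omega> = k \<and> X j \<omega> = k'}
           = prob {\<omega>\<in>space M. X i \<omega> = k} * prob {\<omega>\<in>space M. X j \<omega> = k'}"
proof -
  define A where "A l = X l -` {if l = i then k else k'} \<inter> space M" for l
  have "indep_sets (\<lambda>l. {X l -` B \<inter> space M | B. B \<in> sets (count_space UNIV)}) I"
    using assms(1) unfolding indep_vars_def2 by auto
  then have "prob (\<Inter>l\<in>{i, j}. A l) = (\<Prod>l\<in>{i, j}. prob (A l))"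
    using assms(2-) by (intro indep_setsD) (auto simp: A_def)
  moreover have "A i = {\<omega>\<in>space M. X i \<omega> = k}" "A j = {\<omega>\<in>space M. X j \<omega> = k'}"
    using assms(4) by (auto simp: A_def)
  ultimately show ?thesis
    using assms(4) by (simp add: Collect_conj_eq[symmetric] Int_def conj_ac)
qed

lemma emp_pmf_mean_square_le:
  fixes X :: "nat \<Rightarrow> 'a \<Rightarrow> 'k"
  assumes [measurable]: "\<And>i. X i \<in> measurable M (count_space UNIV)"
    and single: "\<And>i. prob {\<omega>\<in>space M. X i \<omega> = k} = c"
    and pair: "\<And>i j. i \<noteq> j \<Longrightarrow> prob {\<omega>\<in>space M. X i \<omega> = k \<and> X j \<omega> = k} = c\<^sup>2"
    and n: "0 < n"
  shows "integrable M (\<lambda>\<omega>. emp_pmf X n \<omega> k - c)"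
    and "integrable M (\<lambda>\<omega>. (emp_pmf X n \<omega> k - c)\<^sup>2)"
    and "expectation (\<lambda>\<omega>. (emp_pmf X n \<omega> k - c)\<^sup>2) \<le> c / n"
proof -
  define A where "A i = {\<omega>\<in>space M. X i \<omega> = k}" for i
  have A [measurable]: "A i \<in> events" for i
    unfolding A_def by measurable
  define Y where "Y i \<omega> = indicator (A i) \<omega> - c" for i \<omega>
  have emp_eq: "emp_pmf X n \<omega> k - c = (\<Sum>i<n. Y i \<omega>) / n" if "\<omega> \<in> space M" for \<omega>
    using that n by (simp add: emp_pmf_eq_mean_indicator Y_def A_def sum_subtractf indicator_def field_simps)
  have "integrable M (Y i)" for i
    unfolding Y_def by (intro Bochner_Integration.integrable_diff integrable_real_indicator)
      (auto simp: emeasure_eq_measure)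
  then show "integrable M (\<lambda>\<omega>. emp_pmf X n \<omega> k - c)"
    by (subst Bochner_Integration.integrable_cong[OF refl emp_eq]) auto
  have Y_mult: "Y i \<omega> * Y j \<omega> = indicator (A i \<inter> A j) \<omega> - c * indicator (A i) \<omega> - c * indicator (A j) \<omega> + c\<^sup>2"
    for i j \<omega>
    by (simp add: Y_def indicator_inter_arith algebra_simps power2_eq_square)
  have integrable_Y_mult: "integrable M (\<lambda>\<omega>. Y i \<omega> * Y j \<omega>)" for i j
    unfolding Y_mult by (intro Bochner_Integration.integrable_add Bochner_Integration.integrable_diff
      integrable_mult_right integrable_real_indicator) (auto simp: emeasure_eq_measure)
  \<comment> \<open>pairwise independence makes the centred indicators uncorrelated\<close>
  have expectation_Y_mult: "expectation (\<lambda>\<omega>. Y i \<omega> * Y j \<omega>) = (if i = j then c - c\<^sup>2 else 0)" for i j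
  proof -
    have "expectation (\<lambda>\<omega>. Y i \<omega> * Y j \<omega>) = prob (A i \<inter> A j) - c * prob (A i) - c * prob (A j) + c\<^sup>2"
      unfolding Y_mult by (simp add: prob_space emeasure_eq_measure)
    also have "\<dots> = (if i = j then c - c\<^sup>2 else 0)"
    proof (cases "i = j")
      case True
      then show ?thesis
        using single[of i] by (simp add: A_def power2_eq_square)
    next
      case False
      have "A i \<inter> A j = {\<omega>\<in>space M. X i \<omega> = k \<and> X j \<omega> = k}"
        by (auto simp: A_def)
      then have "prob (A i \<inter> A j) = c\<^sup>2"
        using pair[OF False] by simp
      then show ?thesis
        using False single by (simp add: A_def power2_eq_square)
    qed
    finally show ?thesis .
  qed
  have square_eq: "(emp_pmf X n \<omega> k - c)\<^sup>2 = (\<Sum>i<n. \<Sum>j<n. Y i \<omega> * Y j \<omega>) / n\<^sup>2" if "\<omega> \<in> space M" for \<omega>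
    using that by (simp add: emp_eq power2_eq_square sum_product)
  show "integrable M (\<lambda>\<omega>. (emp_pmf X n \<omega> k - c)\<^sup>2)"
    using integrable_Y_mult by (subst Bochner_Integration.integrable_cong[OF refl square_eq]) auto
  have "expectation (\<lambda>\<omega>. (emp_pmf X n \<omega> k - c)\<^sup>2) = (\<Sum>i<n. \<Sum>j<n. expectation (\<lambda>\<omega>. Y i \<omega> * Y j \<omega>)) / n\<^sup>2"
    using integrable_Y_mult by (simp add: Bochner_Integration.integral_cong[OF refl square_eq])
  also have "\<dots> = (c - c\<^sup>2) / n"
    using n by (simp add: expectation_Y_mult sum.delta power2_eq_square)
  also have "\<dots> \<le> c / n"
    by (simp add: divide_right_mono)
  finally show "expectation (\<lambda>\<omega>. (emp_pmf X n \<omega> k - c)\<^sup>2) \<le> c / n" .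
qed

lemma nn_integral_abs_emp_pmf_diff_le:
  fixes X :: "nat \<Rightarrow> 'a \<Rightarrow> 'k"
  assumes X: "\<And>i. X i \<in> measurable M (count_space UNIV)"
    and single: "\<And>i. prob {\<omega>\<in>space M. X i \<omega> = k} = c"
    and pair: "\<And>i j. i \<noteq> j \<Longrightarrow> prob {\<omega>\<in>space M. X i \<omega> = k \<and> X j \<omega> = k} = c\<^sup>2"
    and n: "0 < n" and t: "0 < t"
  shows "(\<integral>\<^sup>+\<omega>. ennreal (\<bar>emp_pmf X n \<omega> k - c\<bar> / t) \<partial>M) \<le> ennreal (sqrt (c / n) / t)"
proof -
  note mean_square = emp_pmf_mean_square_le[where X = X and k = k and c = c and n = n, OF X single pair n]
  have "(\<integral>\<^sup>+\<omega>. ennreal (\<bar>emp_pmf X n \<omega> k - c\<bar> / t) \<partial>M) = ennreal (expectation (\<lambda>\<omega>. \<bar>emp_pmf X n \<omega> k - c\<bar>) / t)"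
    using mean_square(1) t by (subst nn_integral_eq_integral) auto
  also have "\<dots> \<le> ennreal (sqrt (c / n) / t)"
    using expectation_abs_le_sqrt_expectation_square[OF mean_square(1,2)] mean_square(3) t
    by (intro ennreal_leI divide_right_mono) (auto intro: order.trans)
  finally show ?thesis .
qed

lemma emeasure_lp_dist_emp_pmf_gt_le:
  fixes X :: "nat \<Rightarrow> 'a \<Rightarrow> 'k::countable"
  assumes X: "\<And>i. X i \<in> measurable M (count_space UNIV)"
    and single: "\<And>i k. prob {\<omega>\<in>space M. X i \<omega> = k} = \<pi> k"
    and pair: "\<And>i j k. i \<noteq> j \<Longrightarrow> prob {\<omega>\<in>space M. X i \<omega> = k \<and> X j \<omega> = k} = (\<pi> k)\<^sup>2"
    and summable: "(\<lambda>k. sqrt (\<pi> k)) summable_on UNIV"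
    and p: "1 \<le> p" and n: "0 < n" and t: "0 < t"
  shows "emeasure M {\<omega>\<in>space M. t < lp_dist p (emp_pmf X n \<omega>) \<pi>}
           \<le> ennreal ((\<Sum>\<^sub>\<infinity>k. sqrt (\<pi> k)) / (t * sqrt n))"
proof -
  have \<pi>_nonneg: "0 \<le> \<pi> k" for k
    using single[of 0 k] measure_nonneg by metis
  have "emeasure M {\<omega>\<in>space M. t < lp_dist p (emp_pmf X n \<omega>) \<pi>}
      \<le> (\<integral>\<^sup>+k. \<integral>\<^sup>+\<omega>. ennreal (\<bar>emp_pmf X n \<omega> k - \<pi> k\<bar> / t) \<partial>M \<partial>count_space UNIV)"
    by (rule emeasure_lp_dist_gt_le[OF borel_measurable_emp_pmf[OF X] p t])
  also have "\<dots> \<le> (\<integral>\<^sup>+k. ennreal (sqrt (\<pi> k) * (1 / (t * sqrt n))) \<partial>count_space UNIV)"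
  proof (intro nn_integral_mono)
    fix k
    have "(\<integral>\<^sup>+\<omega>. ennreal (\<bar>emp_pmf X n \<omega> k - \<pi> k\<bar> / t) \<partial>M) \<le> ennreal (sqrt (\<pi> k / n) / t)"
      by (rule nn_integral_abs_emp_pmf_diff_le[OF X single pair n t])
    also have "sqrt (\<pi> k / n) / t = sqrt (\<pi> k) * (1 / (t * sqrt n))"
      by (simp add: real_sqrt_divide)
    finally show "(\<integral>\<^sup>+\<omega>. ennreal (\<bar>emp_pmf X n \<omega> k - \<pi> k\<bar> / t) \<partial>M)
        \<le> ennreal (sqrt (\<pi> k) * (1 / (t * sqrt n)))" .
  qed
  also have "\<dots> = ennreal (\<Sum>\<^sub>\<infinity>k. sqrt (\<pi> k) * (1 / (t * sqrt n)))"
    using summable_on_cmult_left[OF summable] by (rule nn_integral_count_space_eq_infsum)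
      (use \<pi>_nonneg t in auto)
  also have "\<dots> = ennreal ((\<Sum>\<^sub>\<infinity>k. sqrt (\<pi> k)) * (1 / (t * sqrt n)))"
    by (simp only: infsum_cmult_left')
  finally show ?thesis
    by simp
qed

lemma lp_dist_emp_pmf_bounded_in_probability:
  fixes X :: "nat \<Rightarrow> 'a \<Rightarrow> 'k::countable"
  assumes indep: "indep_vars (\<lambda>_. count_space UNIV) X UNIV"
    and distr: "\<And>i. distr M (count_space UNIV) (X i) = density (count_space UNIV) (\<lambda>k. ennreal (\<pi> k))"
    and \<pi>_nonneg: "\<And>k. 0 \<le> \<pi> k" and summable: "(\<lambda>k. sqrt (\<pi> k)) summable_on UNIV"
    and p: "1 \<le> p" and \<epsilon>: "0 < \<epsilon>"
  shows "\<exists>C N. \<forall>n\<ge>N. n \<ge> 1 \<and>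
           {\<omega> \<in> space M. lp_dist p (emp_pmf X n \<omega>) \<pi> > C / sqrt (real n)} \<in> sets M \<and>
           measure M {\<omega> \<in> space M. lp_dist p (emp_pmf X n \<omega>) \<pi> > C / sqrt (real n)} < \<epsilon>"
proof -
  have X: "\<And>i. X i \<in> measurable M (count_space UNIV)"
    using indep unfolding indep_vars_def2 by auto
  have single: "prob {\<omega>\<in>space M. X i \<omega> = k} = \<pi> k" for i k
    by (rule prob_eq_if_distr_eq_density[OF X distr \<pi>_nonneg])
  have pair: "prob {\<omega>\<in>space M. X i \<omega> = k \<and> X j \<omega> = k} = (\<pi> k)\<^sup>2" if "i \<noteq> j" for i j k
    using prob_conj_eq_mult_if_indep_vars[OF indep _ _ that] by (simp add: single power2_eq_square)
  define S where "S = (\<Sum>\<^sub>\<infinity>k. sqrt (\<pi> k))"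
  have "0 \<le> S"
    unfolding S_def using \<pi>_nonneg by (intro infsum_nonneg) auto
  define C where "C = (S + 1) / \<epsilon>"
  have C: "0 < C" "S / C < \<epsilon>"
    using \<open>0 \<le> S\<close> \<epsilon> by (auto simp: C_def field_simps)
  show ?thesis
  proof (intro exI[of _ C] exI[of _ 1] allI impI conjI)
    fix n :: nat
    assume n: "1 \<le> n"
    then show "1 \<le> n" .
    show "{\<omega> \<in> space M. lp_dist p (emp_pmf X n \<omega>) \<pi> > C / sqrt (real n)} \<in> sets M"
      by (rule sets_Collect_emp_pmf[OF X])
    have "emeasure M {\<omega> \<in> space M. lp_dist p (emp_pmf X n \<omega>) \<pi> > C / sqrt (real n)}
        \<le> ennreal (S / (C / sqrt n * sqrt n))"
      unfolding S_def using n C by (intro emeasure_lp_dist_emp_pmf_gt_le[OF X single pair summable p]) auto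
    then have "measure M {\<omega> \<in> space M. lp_dist p (emp_pmf X n \<omega>) \<pi> > C / sqrt (real n)} \<le> S / C"
      using n \<open>0 \<le> S\<close> C by (simp add: emeasure_eq_measure ennreal_le_iff)
    then show "measure M {\<omega> \<in> space M. lp_dist p (emp_pmf X n \<omega>) \<pi> > C / sqrt (real n)} < \<epsilon>"
      using C by linarith
  qed
qed

end

theorem proposition2:
  fixes b :: "nat \<Rightarrow> real"
    and Q0 :: "(real ^ 'd::finite) measure"
  assumes b_pos: "\<And>k. b k > 0"
    and R_pos: "conv_radius b > 0"
    and Q0_prob: "prob_space Q0"
    and Q0_sets: "sets Q0 = sets borel"
    and A1: "(\<forall>r. conv_radius b = ereal r \<longrightarrow>
               (\<exists>q0. 0 < q0 \<and> q0 < 1 \<and>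
                  msupp Q0 \<subseteq> {\<theta>. \<forall>j. 0 \<le> \<theta> $ j \<and> \<theta> $ j \<le> q0 * r}))
           \<and> (conv_radius b = \<infinity> \<longrightarrow>
               (\<exists>M>0. msupp Q0 \<subseteq> {\<theta>. \<forall>j. 0 \<le> \<theta> $ j \<and> \<theta> $ j \<le> M}))"
    and A2: "(measure Q0 {0} > 0 \<longrightarrow>
               (\<exists>\<eta>0 \<delta>0. 0 < \<eta>0 \<and> \<eta>0 < 1 \<and> 0 < \<delta>0 \<and> ereal \<delta>0 < conv_radius b \<and>
                  measure Q0 {0} \<le> 1 - \<eta>0 \<and>
                  msupp Q0 \<inter> {\<theta>. \<exists>j. 0 < \<theta> $ j \<and> \<theta> $ j < \<delta>0} = {}))
           \<and> (measure Q0 {0} = 0 \<longrightarrow>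
               (\<exists>\<delta>0. 0 < \<delta>0 \<and> ereal \<delta>0 < conv_radius b \<and>
                  msupp Q0 \<inter> {\<theta>. \<exists>j. 0 < \<theta> $ j \<and> \<theta> $ j < \<delta>0} = {}))"
    and A3: "\<exists>V::nat. \<forall>k\<ge>V. b k / b 0 \<ge> inverse (real k ^ k)"
    and A4: "\<exists>L. (\<lambda>k. b (Suc k) / b k) \<longlonglongrightarrow> L"
  shows "(\<lambda>k. sqrt (pi_mix b Q0 k)) summable_on UNIV
    \<and> (\<forall>(M :: 'a measure) (X :: nat \<Rightarrow> 'a \<Rightarrow> ('d \<Rightarrow> nat)) (p :: ereal).
          prob_space M
          \<and> prob_space.indep_vars M (\<lambda>_. count_space UNIV) X UNIV
          \<and> (\<forall>i. distr M (count_space UNIV) (X i)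
                   = density (count_space UNIV) (\<lambda>k. ennreal (pi_mix b Q0 k)))
          \<and> 1 \<le> p
        \<longrightarrow> (\<forall>\<epsilon>>0. \<exists>C N. \<forall>n\<ge>N. n \<ge> 1 \<and>
               {\<omega> \<in> space M. lp_dist p (emp_pmf X n \<omega>) (pi_mix b Q0) > C / sqrt (real n)} \<in> sets M
             \<and> measure M {\<omega> \<in> space M. lp_dist p (emp_pmf X n \<omega>) (pi_mix b Q0) > C / sqrt (real n)} < \<epsilon>))"
proof -
  obtain \<rho> where \<rho>: "0 \<le> \<rho>" "ereal \<rho> < conv_radius b"
    and supp: "AE \<theta> in Q0. \<forall>j. 0 \<le> \<theta> $ j \<and> \<theta> $ j \<le> \<rho>"
    using bounded_support_inside_conv_radius[OF R_pos Q0_sets A1] by blast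
  have summable: "(\<lambda>k. sqrt (pi_mix b Q0 k)) summable_on UNIV"
    by (rule summable_on_sqrt_pi_mix[OF b_pos Q0_prob supp \<rho>])
  have nonneg: "0 \<le> pi_mix b Q0 k" for k
    by (rule pi_mix_nonneg[OF b_pos supp \<rho>(2)])
  show ?thesis
    using summable prob_space.lp_dist_emp_pmf_bounded_in_probability[OF _ _ _ nonneg summable]
    by blast
qed

end
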